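(* For $k\in\mathbb Z$ and $a\in\mathbb Z_{\ge0}$ let ${\boldsymbol{\mathsf X}}_k(a)={\boldsymbol{\mathsf x}}_{k+1}(a)+{\boldsymbol{\mathsf y}}_k(a)$. Then for every two-rowed array ${\boldsymbol{\mathsf X}}$ (as in the context): (1) $\mathcal F({\boldsymbol{\mathsf X}}_k(2a))={\boldsymbol{\mathsf X}}_{k+2}(2a)$; (2) $\mathcal F({\boldsymbol{\mathsf X}}+{\boldsymbol{\mathsf X}}_k(2a))=\mathcal F({\boldsymbol{\mathsf X}})+{\boldsymbol{\mathsf X}}_{k+2}(2a)$; (3) $\tilde f({\boldsymbol{\mathsf X}}+{\boldsymbol{\mathsf X}}_k(2a))=\tilde f({\boldsymbol{\mathsf X}})+{\boldsymbol{\mathsf X}}_k(2a)$ (with the convention $0+{\boldsymbol{\mathsf Y}}=0$).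
   Context: A two-rowed array is a family ${\boldsymbol{\mathsf X}}=({\sf x}_k;{\sf y}_k)_{k\in\mathbb Z}$ of non-negative integers with ${\sf x}_k={\sf y}_k=0$ for all but finitely many $k$; sums and differences are componentwise. ${\boldsymbol{\mathsf x}}_k(a)$ (resp. ${\boldsymbol{\mathsf y}}_k(a)$) is the array with ${\sf x}_k=a$ (resp. ${\sf y}_k=a$) and all other entries $0$. For $z\in\mathbb Z_{\ge0}$ write $z=2\,\mathrm{quo}(z)+\mathrm{rem}(z)$ with $\mathrm{rem}(z)\in\{0,1\}$. The map $\mathcal F$: given ${\boldsymbol{\mathsf X}}=({\sf x}_k;{\sf y}_k)$, put for all $k\in\mathbb Z$: ${\sf y}'_k=\mathrm{rem}({\sf y}_k)+2\,\mathrm{quo}({\sf y}_{k-1})$; ${\sf z}_k=\min\{{\sf x}_k,{\sf y}'_k\}$; ${\sf X}_k={\sf x}_k-{\sf z}_k+{\sf z}_{k-1}$; $\widetilde{\sf Y}_k={\sf y}'_k-{\sf z}_k+{\sf z}_{k-1}$; $\widetilde{\sf X}_k=\mathrm{rem}({\sf X}_k)+2\,\mathrm{quo}({\sf X}_{k-1})$; and $\mathcal F({\boldsymbol{\mathsf X}})=(\widetilde{\sf X}_k;\widetilde{\sf Y}_k)_{k\in\mathbb Z}$. Signature rule: the signature of ${\boldsymbol{\mathsf X}}$ is the finite sequence $\sigma({\boldsymbol{\mathsf X}})=(\cdots\,-^{{\sf y}_{k+1}}\,+^{{\sf x}_{k+1}}\,-^{{\sf y}_k}\,+^{{\sf x}_k}\,-^{{\sf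 y}_{k-1}}\,+^{{\sf x}_{k-1}}\cdots)$ (read left to right with $k$ decreasing; superscripts are multiplicities). Repeatedly cancel a pair $(+,-)$ in which the $+$ is to the left of the $-$ with only canceled symbols between them, until the reduced signature $\overline\sigma({\boldsymbol{\mathsf X}})$ has the form $(-\cdots-+\cdots+)$. If the leftmost $+$ of $\overline\sigma({\boldsymbol{\mathsf X}})$ comes from $+^{{\sf x}_k}$, then $\tilde f{\boldsymbol{\mathsf X}}={\boldsymbol{\mathsf X}}-{\boldsymbol{\mathsf x}}_k(1)+{\boldsymbol{\mathsf y}}_k(1)$; if $\overline\sigma({\boldsymbol{\mathsf X}})$ has no $+$, then $\tilde f{\boldsymbol{\mathsf X}}=0$. *)

theory Defs
  imports Main
begin

text \<open>A two-rowed array (x_k; y_k)_{k in Z} is represented as a pair of functions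
  int => nat (first row x, second row y); it is an array when its support is finite.\<close>

type_synonym arr = "(int \<Rightarrow> nat) \<times> (int \<Rightarrow> nat)"

definition supp_arr :: "arr \<Rightarrow> int set" where
  "supp_arr X = {k. fst X k \<noteq> 0 \<or> snd X k \<noteq> 0}"

definition is_array :: "arr \<Rightarrow> bool" where
  "is_array X \<longleftrightarrow> finite (supp_arr X)"

definition add_arr :: "arr \<Rightarrow> arr \<Rightarrow> arr" where
  "add_arr X Y = ((\<lambda>k. fst X k + fst Y k), (\<lambda>k. snd X k + snd Y k))"

definition sub_arr :: "arr \<Rightarrow> arr \<Rightarrow> arr" where
  "sub_arr X Y = ((\<lambda>k. fst X k - fst Y k), (\<lambda>k. snd X k - snd Y k))"

definition xa :: "int \<Rightarrow> nat \<Rightarrow> arr" where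
  "xa k a = ((\<lambda>j. if j = k then a else 0), (\<lambda>j. 0))"

definition ya :: "int \<Rightarrow> nat \<Rightarrow> arr" where
  "ya k a = ((\<lambda>j. 0), (\<lambda>j. if j = k then a else 0))"

definition XX :: "int \<Rightarrow> nat \<Rightarrow> arr" where
  "XX k a = add_arr (xa (k + 1) a) (ya k a)"

definition quo :: "nat \<Rightarrow> nat" where "quo z = z div 2"
definition rem :: "nat \<Rightarrow> nat" where "rem z = z mod 2"

definition FF :: "arr \<Rightarrow> arr" where
  "FF X = (let x = fst X; y = snd X;
      y' = (\<lambda>k. rem (y k) + 2 * quo (y (k - 1)));
      z = (\<lambda>k. min (x k) (y' k));
      Xn = (\<lambda>k. x k - z k + z (k - 1));
      Yt = (\<lambda>k. y' k - z k + z (k - 1));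
      Xt = (\<lambda>k. rem (Xn k) + 2 * quo (Xn (k - 1)))
    in (Xt, Yt))"

text \<open>Signature: a list of symbols (True = +, False = -) tagged with the index k
  they come from, read with k decreasing; for each k first y_k minus signs then x_k plus signs.
  Indices outside the support contribute nothing, so we range over [-N..N] with N
  bounding the support.\<close>

definition sig_bound :: "arr \<Rightarrow> int" where
  "sig_bound X = Max (insert 0 (abs ` supp_arr X))"

definition sig :: "arr \<Rightarrow> (bool \<times> int) list" where
  "sig X = concat (map (\<lambda>k. replicate (snd X k) (False, k) @ replicate (fst X k) (True, k))
                        (rev [- sig_bound X .. sig_bound X]))"

text \<open>Reduction by cancelling pairs (+,-) with the + left of the - and only cancelled
  symbols in between (processed from the right; the result has the form - ... - + ... +).\<close>

fun reduce_sig :: "(bool \<times> int) list \<Rightarrow> (bool \<times> int) list" where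
  "reduce_sig [] = []"
| "reduce_sig (s # rest) =
     (let r = reduce_sig rest in
      if fst s \<and> r \<noteq> [] \<and> \<not> fst (hd r) then tl r else s # r)"

text \<open>Kashiwara operator f-tilde; None represents 0.\<close>

definition ftilde :: "arr \<Rightarrow> arr option" where
  "ftilde X = (case find fst (reduce_sig (sig X)) of
      None \<Rightarrow> None
    | Some (_, k) \<Rightarrow> Some (add_arr (sub_arr X (xa k 1)) (ya k 1)))"

end

theory Submission
  imports Defs "HOL-Library.Function_Algebras"
begin

text \<open>Every stage of \<open>\<F>\<close> commutes with adding a spike of even height: the step
  \<open>v\<^sub>j \<mapsto> rem v\<^sub>j + 2 quo v\<^sub>j\<^sub>-\<^sub>1\<close> moves an even amount one place up intact, and since
  \<open>y'\<close> and \<open>x\<close> receive the same spike at \<open>k + 1\<close>, so does \<open>z = min(x, y')\<close>, which then carries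
  it along to \<open>k + 2\<close>. In the signature the new block \<open>+\<^sup>2\<^sup>a\<close> ends the entry of \<open>x\<^sub>k\<^sub>+\<^sub>1\<close> and
  the new block \<open>-\<^sup>2\<^sup>a\<close> begins the entry of \<open>y\<^sub>k\<close>; being adjacent, they cancel each other,
  so the reduced signature, and with it \<open>f\<close>, is unchanged (this part holds for any height).\<close>

definition spike :: "int \<Rightarrow> nat \<Rightarrow> int \<Rightarrow> nat" where
  "spike m c = (\<lambda>j. if j = m then c else 0)"

definition carry :: "(int \<Rightarrow> nat) \<Rightarrow> int \<Rightarrow> nat" where
  "carry v = (\<lambda>j. rem (v j) + 2 * quo (v (j - 1)))"

definition transfer :: "(int \<Rightarrow> nat) \<Rightarrow> (int \<Rightarrow> nat) \<Rightarrow> int \<Rightarrow> nat" where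
  "transfer u z = (\<lambda>j. u j - z j + z (j - 1))"

lemma add_arr_eq: "add_arr X Y = (fst X + fst Y, snd X + snd Y)"
  by (simp add: add_arr_def plus_fun_def)

lemma XX_eq_spike: "XX k b = (spike (k + 1) b, spike k b)"
  by (auto simp: XX_def add_arr_def xa_def ya_def spike_def)

lemma FF_eq_carry_transfer:
  "FF X = (let y' = carry (snd X); z = (\<lambda>j. min (fst X j) (y' j))
           in (carry (transfer (fst X) z), transfer y' z))"
  by (simp add: FF_def carry_def transfer_def Let_def)

lemma carry_add_even_spike: "carry (v + spike m (2 * a)) = carry v + spike (m + 1) (2 * a)"
  by (auto simp: carry_def spike_def rem_def quo_def)

lemma transfer_add_spike:
  assumes "z \<le> u"
  shows "transfer (u + spike m c) (z + spike m c) = transfer u z + spike (m + 1) c"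
  using le_funD[OF assms, of m] by (auto simp: transfer_def spike_def)

lemma min_add_spike:
  "(\<lambda>j. min (u j + spike m c j) (v j + spike m c j)) = (\<lambda>j. min (u j) (v j)) + spike m c"
  by (auto simp: spike_def)

lemma FF_add_XX_even: "FF (add_arr X (XX k (2 * a))) = add_arr (FF X) (XX (k + 2) (2 * a))"
proof -
  obtain x y where X: "X = (x, y)" by fastforce
  define y' where "y' = carry y"
  define z where "z = (\<lambda>j. min (x j) (y' j))"
  let ?s = "spike (k + 1) (2 * a)"
  have "z \<le> x" "z \<le> y'" by (simp_all add: z_def le_fun_def)
  have "FF (add_arr X (XX k (2 * a)))
      = (carry (transfer (x + ?s) (z + ?s)), transfer (y' + ?s) (z + ?s))"
    by (simp add: X FF_eq_carry_transfer add_arr_eq XX_eq_spike carry_add_even_spike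
        min_add_spike Let_def flip: y'_def z_def)
  also have "\<dots> = (carry (transfer x z) + spike (k + 3) (2 * a),
                     transfer y' z + spike (k + 2) (2 * a))"
    using transfer_add_spike[OF \<open>z \<le> x\<close>] transfer_add_spike[OF \<open>z \<le> y'\<close>]
    by (simp add: carry_add_even_spike add.assoc)
  also have "\<dots> = add_arr (FF X) (XX (k + 2) (2 * a))"
    by (simp add: X FF_eq_carry_transfer add_arr_eq XX_eq_spike Let_def add.assoc
        flip: y'_def z_def)
  finally show ?thesis .
qed

lemma FF_XX_even: "FF (XX k (2 * a)) = XX (k + 2) (2 * a)"
proof -
  have FF_zero: "FF (0, 0) = (0, 0)"
    by (simp add: FF_def rem_def quo_def zero_fun_def Let_def)
  show ?thesis
    using FF_add_XX_even[of "(0, 0)"] by (simp add: FF_zero add_arr_eq)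
qed

definition sig_block :: "arr \<Rightarrow> int \<Rightarrow> (bool \<times> int) list" where
  "sig_block X j = replicate (snd X j) (False, j) @ replicate (fst X j) (True, j)"

lemma sig_block_eq_Nil: "j \<notin> supp_arr X \<Longrightarrow> sig_block X j = []"
  by (simp add: sig_block_def supp_arr_def)

lemma abs_le_sig_bound: "is_array X \<Longrightarrow> j \<in> supp_arr X \<Longrightarrow> \<bar>j\<bar> \<le> sig_bound X"
  unfolding sig_bound_def is_array_def by (rule Max_ge) simp_all

lemma sig_bound_nonneg: "is_array X \<Longrightarrow> 0 \<le> sig_bound X"
  unfolding sig_bound_def is_array_def by (rule Max_ge) simp_all

lemma sig_eq_concat_sig_block:
  assumes "is_array X" and "sig_bound X \<le> M"
  shows "sig X = concat (map (sig_block X) (rev [- M .. M]))"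
proof -
  let ?N = "sig_bound X"
  have outside: "sig_block X j = []" if "?N < \<bar>j\<bar>" for j
    using that abs_le_sig_bound[OF assms(1), of j] sig_block_eq_Nil[of j X] by linarith
  have parts: "[- M .. M] = [- M .. - ?N - 1] @ [- ?N .. ?N] @ [?N + 1 .. M]"
    using assms(2) sig_bound_nonneg[OF assms(1)]
    by (simp add: upto_split1[of "- M" "- ?N" M] upto_split2[of "- ?N" ?N M])
  have empty: "concat (map (sig_block X) (rev [?N + 1 .. M])) = []"
    "concat (map (sig_block X) (rev [- M .. - ?N - 1])) = []"
    by (auto simp: concat_eq_Nil_conv intro!: outside)
  have "sig X = concat (map (sig_block X) (rev [- ?N .. ?N]))"
    by (simp add: sig_def sig_block_def[abs_def])
  also have "\<dots> = concat (map (sig_block X) (rev [- M .. M]))"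
    by (simp only: parts rev_append map_append concat_append empty append_Nil append_Nil2)
  finally show ?thesis .
qed

lemma reduce_sig_cancel: "fst p \<Longrightarrow> \<not> fst m \<Longrightarrow> reduce_sig (u @ p # m # v) = reduce_sig (u @ v)"
  by (induction u) (auto simp: Let_def)

lemma reduce_sig_cancel_replicate:
  assumes "fst p" and "\<not> fst m"
  shows "reduce_sig (u @ replicate n p @ replicate n m @ v) = reduce_sig (u @ v)"
proof (induction n arbitrary: v)
  case (Suc n)
  have "u @ replicate (Suc n) p @ replicate (Suc n) m @ v
      = (u @ replicate n p) @ p # m # (replicate n m @ v)"
    by (simp add: replicate_append_same[symmetric])
  then show ?case
    using Suc reduce_sig_cancel[OF assms, of "u @ replicate n p" "replicate n m @ v"] by simp
qed simp

lemma set_reduce_sig_subset: "set (reduce_sig xs) \<subseteq> set xs"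
  by (induction xs) (auto simp: Let_def dest: list.set_sel(2))

lemma is_array_add_XX: "is_array X \<Longrightarrow> is_array (add_arr X (XX k b))"
  unfolding is_array_def
  by (rule finite_subset[of _ "supp_arr X \<union> {k, k + 1}"])
    (auto simp: supp_arr_def add_arr_def XX_def xa_def ya_def)

lemma sig_block_add_XX:
  "j \<notin> {k, k + 1} \<Longrightarrow> sig_block (add_arr X (XX k b)) j = sig_block X j"
  "sig_block (add_arr X (XX k b)) (k + 1) = sig_block X (k + 1) @ replicate b (True, k + 1)"
  "sig_block (add_arr X (XX k b)) k = replicate b (False, k) @ sig_block X k"
  by (simp_all add: sig_block_def add_arr_def XX_def xa_def ya_def replicate_add
      add.commute[of "snd X k"])

lemma reduce_sig_sig_add_XX:
  assumes "is_array X"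
  shows "reduce_sig (sig (add_arr X (XX k b))) = reduce_sig (sig X)"
proof -
  let ?Y = "add_arr X (XX k b)"
  have "is_array ?Y" using assms by (rule is_array_add_XX)
  define M where "M = max (sig_bound X) (sig_bound ?Y) + \<bar>k\<bar> + 2"
  have "sig_bound X \<le> M" "sig_bound ?Y \<le> M" "- M \<le> k - 1" "k + 2 \<le> M"
    using sig_bound_nonneg[OF assms] sig_bound_nonneg[OF \<open>is_array ?Y\<close>] by (auto simp: M_def)
  moreover from \<open>k + 2 \<le> M\<close> have "[k + 1 .. M] = (k + 1) # [k + 2 .. M]"
    using upto_rec1[of "k + 1" M] unfolding add.assoc one_add_one by simp
  ultimately have range: "rev [- M .. M] = rev [k + 2 .. M] @ [k + 1, k] @ rev [- M .. k - 1]"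
    by (simp add: upto_split3[of "- M" k M])
  let ?above = "concat (map (sig_block X) (rev [k + 2 .. M])) @ sig_block X (k + 1)"
  let ?below = "sig_block X k @ concat (map (sig_block X) (rev [- M .. k - 1]))"
  have same_blocks: "map (sig_block ?Y) (rev [k + 2 .. M]) = map (sig_block X) (rev [k + 2 .. M])"
    "map (sig_block ?Y) (rev [- M .. k - 1]) = map (sig_block X) (rev [- M .. k - 1])"
    by (auto intro!: map_cong sig_block_add_XX(1))
  have "sig ?Y = ?above @ replicate b (True, k + 1) @ replicate b (False, k) @ ?below"
    by (simp add: sig_eq_concat_sig_block[OF \<open>is_array ?Y\<close> \<open>sig_bound ?Y \<le> M\<close>] range
        same_blocks sig_block_add_XX(2,3))
  moreover have "sig X = ?above @ ?below"
    by (simp add: sig_eq_concat_sig_block[OF assms \<open>sig_bound X \<le> M\<close>] range)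
  ultimately show ?thesis
    by (simp only: reduce_sig_cancel_replicate fst_conv not_False_eq_True)
qed

lemma find_fst_reduce_sig_nonzero:
  assumes "find fst (reduce_sig (sig X)) = Some (s, j)"
  shows "fst X j \<noteq> 0"
proof -
  have "(s, j) \<in> set (reduce_sig (sig X))" "s"
    using assms unfolding find_Some_iff by (metis fst_conv nth_mem)+
  then have "(s, j) \<in> set (sig X)" "s"
    using set_reduce_sig_subset by blast+
  then show ?thesis by (auto simp: sig_def)
qed

lemma ftilde_add_XX:
  assumes "is_array X"
  shows "ftilde (add_arr X (XX k b)) = map_option (\<lambda>Y. add_arr Y (XX k b)) (ftilde X)"
proof (cases "find fst (reduce_sig (sig X))")
  case None
  then show ?thesis by (simp add: ftilde_def reduce_sig_sig_add_XX[OF assms])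
next
  case (Some p)
  obtain s j where p: "p = (s, j)" by fastforce
  have "fst X j \<noteq> 0"
    using Some p by (simp add: find_fst_reduce_sig_nonzero)
  then have "add_arr (sub_arr (add_arr X (XX k b)) (xa j 1)) (ya j 1)
      = add_arr (add_arr (sub_arr X (xa j 1)) (ya j 1)) (XX k b)"
    by (auto simp: add_arr_def sub_arr_def XX_def xa_def ya_def)
  then show ?thesis
    using Some p by (simp add: ftilde_def reduce_sig_sig_add_XX[OF assms])
qed

theorem mainTheorem6:
  fixes X :: arr and k :: int and a :: nat
  assumes "is_array X"
  shows "FF (XX k (2 * a)) = XX (k + 2) (2 * a)
    \<and> FF (add_arr X (XX k (2 * a))) = add_arr (FF X) (XX (k + 2) (2 * a))
    \<and> ftilde (add_arr X (XX k (2 * a))) = map_option (\<lambda>Y. add_arr Y (XX k (2 * a))) (ftilde X)"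
  using FF_XX_even FF_add_XX_even ftilde_add_XX[OF assms] by blast

end
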